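(* The following hold. (1) If $G$ is a finite elementary abelian $2$-group, then $\Gamma^+_{G,H}$ admits a perfect code for every subgroup $H$ of $G$. (2) If $G$ is a finite abelian group of odd order, then $\Gamma^+_{G,H}$ admits a perfect code if and only if $H\in\{\{0\},G\}$. (3) If $n$ is an even positive integer and $H\le\mathbb{Z}_n$, then $\Gamma^+_{\mathbb{Z}_n,H}$ admits a perfect code if and only if $H\in\{\mathbb{Z}_n,\{0\},\langle 2\rangle\}$. (4) If $G=\mathbb{Z}_4^n$ for some $n\ge1$ and $H\le G$, then $\Gamma^+_{G,H}$ admits a perfect code if and only if $H\in\{\{0\},G\}$ or $H$ contains all involutions of $G$.
   Context: Abelian groups are written additively with identity $0$. For a subgroup $H$ of a finite abelian group $G$, the extended subgroup sum graph $\Gamma^+_{G,H}$ is the simple undirected graph with vertex set $G$ in which distinct vertices $x,y$ are adjacent if and only if $x+y\in H$. A perfect code in a graph is a set $C$ of vertices that is independent and such that every vertex not in $C$ is adjacent to exactly one vertex of $C$. An involution is an element of order exactly $2$. *)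

theory Defs
  imports "HOL-Algebra.Algebra"
begin

text \<open>Extended subgroup sum graph of G w.r.t. H (group written multiplicatively in
HOL-Algebra; the group operation plays the role of +): vertex set carrier G,
distinct x, y adjacent iff x \<otimes> y \<in> H.\<close>
definition sum_graph_adj :: "('a, 'b) monoid_scheme \<Rightarrow> 'a set \<Rightarrow> 'a \<Rightarrow> 'a \<Rightarrow> bool" where
  "sum_graph_adj G H x y \<longleftrightarrow>
     x \<in> carrier G \<and> y \<in> carrier G \<and> x \<noteq> y \<and> x \<otimes>\<^bsub>G\<^esub> y \<in> H"

definition perfect_code :: "('a, 'b) monoid_scheme \<Rightarrow> 'a set \<Rightarrow> 'a set \<Rightarrow> bool" where
  "perfect_code G H C \<longleftrightarrow>
     C \<subseteq> carrier G \<and>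
     (\<forall>x\<in>C. \<forall>y\<in>C. \<not> sum_graph_adj G H x y) \<and>
     (\<forall>x\<in>carrier G - C. \<exists>!c. c \<in> C \<and> sum_graph_adj G H x c)"

definition has_perfect_code :: "('a, 'b) monoid_scheme \<Rightarrow> 'a set \<Rightarrow> bool" where
  "has_perfect_code G H \<longleftrightarrow> (\<exists>C. perfect_code G H C)"

definition involutions :: "('a, 'b) monoid_scheme \<Rightarrow> 'a set" where
  "involutions G = {x \<in> carrier G. group.ord G x = 2}"

end

theory Submission
  imports Defs
begin

text \<open>
  For a subgroup H of an abelian group G, the graph has a perfect code iff H = {0} or H contains
  every double 2x. If 2G \<subseteq> H then x + y \<in> H iff y - x \<in> H, so the graph is a disjoint union
  of cliques on the cosets of H and a transversal of the cosets is a perfect code; for H = {0}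
  the cliques are the pairs {x, -x}. Conversely, given a code element z with 2z \<notin> H and some
  h \<noteq> 0 in H, either z + h lies in the code and -z has two code neighbours, or the code
  neighbour c of z + h is adjacent to z; and a vertex x off the code inherits 2x \<in> H from its
  code neighbour c, as 2x = 2(x + c) - 2c. The four cases then only require computing 2G: it is
  G when |G| is odd, the index-2 subgroup generated by 2 in Z_n for even n, and the 2-torsion
  subgroup, i.e. 0 and the involutions, in Z_4^n.
\<close>

lemma perfect_codeD:
  assumes "perfect_code G H C"
  shows "C \<subseteq> carrier G"
    and "\<And>x y. x \<in> C \<Longrightarrow> y \<in> C \<Longrightarrow> \<not> sum_graph_adj G H x y"
    and "\<And>x. x \<in> carrier G \<Longrightarrow> x \<notin> C \<Longrightarrow> \<exists>!c. c \<in> C \<and> sum_graph_adj G H x c"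
  using assms unfolding perfect_code_def by auto

lemma perfect_code_representatives:
  assumes R: "equiv (carrier G) R"
    and adj: "\<And>x y. sum_graph_adj G H x y \<longleftrightarrow> (x, y) \<in> R \<and> x \<noteq> y"
  shows "perfect_code G H {x \<in> carrier G. x = (SOME y. (x, y) \<in> R)}"
proof -
  define r where "r x = (SOME y. (x, y) \<in> R)" for x
  have r_rel: "(x, r x) \<in> R" if "x \<in> carrier G" for x
  proof -
    have "(x, x) \<in> R" using equiv_class_self[OF R that] by simp
    then show ?thesis unfolding r_def by (rule someI)
  qed
  have r_eq: "r x = r y" if "(x, y) \<in> R" for x y
  proof -
    have "R `` {x} = R `` {y}" using R that by (rule equiv_class_eq)
    then show ?thesis unfolding r_def by (simp add: Image_singleton set_eq_iff)
  qed
  have r_carrier: "r x \<in> carrier G" if "x \<in> carrier G" for x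
    using r_rel[OF that] equiv_type[OF R] by blast
  show ?thesis
    unfolding perfect_code_def r_def[symmetric]
  proof (intro conjI ballI)
    fix x y assume "x \<in> {x \<in> carrier G. x = r x}" "y \<in> {x \<in> carrier G. x = r x}"
    then show "\<not> sum_graph_adj G H x y" using adj r_eq by (metis (mono_tags) mem_Collect_eq)
  next
    fix x assume x: "x \<in> carrier G - {x \<in> carrier G. x = r x}"
    then have "r x \<noteq> x" "r (r x) = r x" using r_eq[OF r_rel, of x] by auto
    then have "r x \<in> {x \<in> carrier G. x = r x} \<and> sum_graph_adj G H x (r x)"
      using x r_carrier r_rel adj by auto
    moreover have "c = r x" if "c \<in> {x \<in> carrier G. x = r x}" "sum_graph_adj G H x c" for c
      using that adj r_eq by (metis (mono_tags) mem_Collect_eq)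
    ultimately show "\<exists>!c. c \<in> {x \<in> carrier G. x = r x} \<and> sum_graph_adj G H x c" by blast
  qed auto
qed

lemma (in group) has_perfect_code_trivial_subgroup: "has_perfect_code G {\<one>}"
proof -
  define R where "R = {(x, y). x \<in> carrier G \<and> y \<in> carrier G \<and> (x = y \<or> x \<otimes> y = \<one>)}"
  have "R \<subseteq> carrier G \<times> carrier G" "refl_on (carrier G) R"
    unfolding R_def refl_on_def by auto
  moreover have "sym R"
    unfolding R_def by (rule symI) (auto intro: inv_comm)
  moreover have "trans R"
  proof (rule transI)
    fix x y z assume "(x, y) \<in> R" "(y, z) \<in> R"
    then have carrier: "x \<in> carrier G" "y \<in> carrier G" "z \<in> carrier G"
      and "x = y \<or> x \<otimes> y = \<one>" "y = z \<or> y \<otimes> z = \<one>"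
      unfolding R_def by auto
    then have "x = z \<or> x \<otimes> z = \<one>"
      by (metis inv_comm inv_equality)
    then show "(x, z) \<in> R" using carrier unfolding R_def by auto
  qed
  ultimately have R: "equiv (carrier G) R"
    by (rule equivI)
  have adj: "sum_graph_adj G {\<one>} x y \<longleftrightarrow> (x, y) \<in> R \<and> x \<noteq> y" for x y
    unfolding sum_graph_adj_def R_def by auto
  show ?thesis
    unfolding has_perfect_code_def by (rule exI, rule perfect_code_representatives[OF R adj])
qed

lemma (in comm_group) has_perfect_code_if_squares_mem:
  assumes H: "subgroup H G" and squares: "\<And>x. x \<in> carrier G \<Longrightarrow> x \<otimes> x \<in> H"
  shows "has_perfect_code G H"
proof -
  interpret H: subgroup H G by fact
  have "x \<otimes> y \<in> H \<longleftrightarrow> inv x \<otimes> y \<in> H" if "x \<in> carrier G" "y \<in> carrier G" for x y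
  proof -
    have sq: "x \<otimes> x \<in> H" "inv (x \<otimes> x) \<in> H"
      using squares[OF \<open>x \<in> carrier G\<close>] by auto
    have "x \<otimes> y = (x \<otimes> x) \<otimes> (inv x \<otimes> y)"
      using that by (simp add: m_assoc[symmetric]) (simp add: m_assoc)
    moreover have "inv x \<otimes> y = inv (x \<otimes> x) \<otimes> (x \<otimes> y)"
      using that by (simp add: inv_mult m_assoc[symmetric]) (simp add: m_assoc)
    ultimately show ?thesis
      using H.m_closed[OF sq(1)] H.m_closed[OF sq(2)] by metis
  qed
  then have adj: "sum_graph_adj G H x y \<longleftrightarrow> (x, y) \<in> rcong H \<and> x \<noteq> y" for x y
    unfolding sum_graph_adj_def r_congruent_def by auto
  show ?thesis
    unfolding has_perfect_code_def
    by (rule exI, rule perfect_code_representatives[OF H.equiv_rcong[OF is_group] adj])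
qed

lemma (in comm_group) perfect_code_square_mem:
  assumes H: "subgroup H G" and C: "perfect_code G H C" and nontrivial: "H \<noteq> {\<one>}"
    and z: "z \<in> C"
  shows "z \<otimes> z \<in> H"
proof (rule ccontr)
  interpret H: subgroup H G by fact
  note C_carrier = perfect_codeD(1)[OF C] and independent = perfect_codeD(2)[OF C]
    and unique = perfect_codeD(3)[OF C]
  assume zz: "z \<otimes> z \<notin> H"
  obtain h where h: "h \<in> H" "h \<noteq> \<one>" using nontrivial H.one_closed by blast
  have zc: "z \<in> carrier G" and hc: "h \<in> carrier G" using z C_carrier h H.subset by auto
  have "inv z \<noteq> z" using zz zc r_inv H.one_closed by metis
  then have adj_inv: "sum_graph_adj G H (inv z) z"
    using zc unfolding sum_graph_adj_def by simp
  then have inv_notin: "inv z \<notin> C" using independent z by blast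
  define w where "w = z \<otimes> h"
  have wc: "w \<in> carrier G" unfolding w_def using zc hc by simp
  have "w \<noteq> z" unfolding w_def using zc hc h(2) by simp
  show False
  proof (cases "w \<in> C")
    case True
    have "inv z \<noteq> w"
    proof
      assume "inv z = w"
      then have "(z \<otimes> z) \<otimes> h = \<one>" unfolding w_def using zc hc by (metis m_assoc r_inv)
      then have "z \<otimes> z = inv h" using zc hc by (simp add: inv_equality)
      then show False using zz h(1) by simp
    qed
    moreover have "inv z \<otimes> w = h" unfolding w_def using zc hc by (simp add: m_assoc[symmetric])
    ultimately have "sum_graph_adj G H (inv z) w"
      using zc wc h(1) unfolding sum_graph_adj_def by simp
    then show False using unique[of "inv z"] inv_notin adj_inv True z \<open>w \<noteq> z\<close> zc by blast
  next
    case False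
    then obtain c where c: "c \<in> C" "sum_graph_adj G H w c" using unique[of w] wc by blast
    have cc: "c \<in> carrier G" using c C_carrier by auto
    have "w \<otimes> c = h \<otimes> (z \<otimes> c)" unfolding w_def using zc hc cc by (simp add: m_ac)
    then have "z \<otimes> c = inv h \<otimes> (w \<otimes> c)" using zc hc cc by (simp add: m_assoc[symmetric])
    moreover have "w \<otimes> c \<in> H" using c(2) unfolding sum_graph_adj_def by simp
    ultimately have "z \<otimes> c \<in> H" using h(1) by simp
    moreover from this have "c \<noteq> z" using zz by auto
    ultimately have "sum_graph_adj G H z c" using zc cc unfolding sum_graph_adj_def by simp
    then show False using independent z c(1) by blast
  qed
qed

lemma (in comm_group) square_mem_if_perfect_code:
  assumes H: "subgroup H G" and C: "perfect_code G H C" and nontrivial: "H \<noteq> {\<one>}"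
    and x: "x \<in> carrier G"
  shows "x \<otimes> x \<in> H"
proof (cases "x \<in> C")
  case True
  then show ?thesis using perfect_code_square_mem[OF assms(1-3)] by blast
next
  case False
  interpret H: subgroup H G by fact
  obtain c where c: "c \<in> C" "sum_graph_adj G H x c" using perfect_codeD(3)[OF C x False] by blast
  have cc: "c \<in> carrier G" using c(1) perfect_codeD(1)[OF C] by auto
  have "(x \<otimes> c) \<otimes> (x \<otimes> c) = (x \<otimes> x) \<otimes> (c \<otimes> c)" using x cc by (simp add: m_ac)
  then have "x \<otimes> x = ((x \<otimes> c) \<otimes> (x \<otimes> c)) \<otimes> inv (c \<otimes> c)" using x cc by (simp add: m_assoc)
  moreover have "x \<otimes> c \<in> H" using c(2) unfolding sum_graph_adj_def by simp
  moreover have "c \<otimes> c \<in> H" using perfect_code_square_mem[OF assms(1-3) c(1)] .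
  ultimately show ?thesis by simp
qed

lemma (in comm_group) has_perfect_code_iff:
  assumes "subgroup H G"
  shows "has_perfect_code G H \<longleftrightarrow> H = {\<one>} \<or> (\<forall>x\<in>carrier G. x \<otimes> x \<in> H)"
  using square_mem_if_perfect_code[OF assms] has_perfect_code_trivial_subgroup
    has_perfect_code_if_squares_mem[OF assms]
  unfolding has_perfect_code_def by blast

lemma (in group) square_root_if_odd_order:
  assumes "odd (order G)" and x: "x \<in> carrier G"
  shows "\<exists>y\<in>carrier G. y \<otimes> y = x"
proof -
  obtain k where k: "order G = 2 * k + 1" using assms(1) oddE by blast
  have exponent: "k + 1 + (k + 1) = order G + 1"
    using k by simp
  have "x [^] (k + 1) \<otimes> x [^] (k + 1) = x [^] (order G + 1)"
    unfolding exponent[symmetric] using x by (rule nat_pow_mult)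
  also have "\<dots> = x" using x by (simp add: nat_pow_Suc pow_order_eq_1)
  finally show ?thesis using x by blast
qed

lemma (in comm_group) has_perfect_code_iff_odd_order:
  assumes "odd (order G)" and H: "subgroup H G"
  shows "has_perfect_code G H \<longleftrightarrow> H = {\<one>} \<or> H = carrier G"
proof -
  interpret H: subgroup H G by fact
  have "(\<forall>x\<in>carrier G. x \<otimes> x \<in> H) \<longleftrightarrow> H = carrier G"
    using square_root_if_odd_order[OF assms(1)] H.subset by blast
  then show ?thesis using has_perfect_code_iff[OF H] by blast
qed

lemma mod_mem_carrier_integer_mod_group: "a mod int n \<in> carrier (integer_mod_group n)"
  by (simp add: carrier_integer_mod_group)

lemma mod_eq_self_integer_mod_group:
  "y \<in> carrier (integer_mod_group n) \<Longrightarrow> y mod int n = y"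
  by (cases "n = 0") (simp_all add: carrier_integer_mod_group)

lemma generate_two_integer_mod_group:
  assumes "even n"
  shows "generate (integer_mod_group n) {2 mod int n} = {y \<in> carrier (integer_mod_group n). even y}"
proof -
  interpret Z: group "integer_mod_group n" by simp
  have gen: "y \<in> generate (integer_mod_group n) {2 mod int n} \<longleftrightarrow>
      (\<exists>k. y = k * (2 mod int n) mod int n)" for y
    unfolding Z.generate_pow[OF mod_mem_carrier_integer_mod_group] int_pow_integer_mod_group
    by blast
  have two_dvd: "2 dvd int n" using assms by simp
  show ?thesis
  proof (intro equalityI subsetI)
    fix y assume "y \<in> generate (integer_mod_group n) {2 mod int n}"
    then obtain k where k: "y = k * (2 mod int n) mod int n" using gen by blast
    have "even (2 mod int n)" using two_dvd by (simp only: dvd_mod_iff dvd_refl)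
    then have "even y" unfolding k using two_dvd by (simp add: dvd_mod_iff)
    then show "y \<in> {y \<in> carrier (integer_mod_group n). even y}"
      unfolding k using mod_mem_carrier_integer_mod_group by blast
  next
    fix y assume y: "y \<in> {y \<in> carrier (integer_mod_group n). even y}"
    then have "y div 2 * (2 mod int n) mod int n = y"
      by (simp add: mod_mult_right_eq mod_eq_self_integer_mod_group)
    then show "y \<in> generate (integer_mod_group n) {2 mod int n}" using gen by metis
  qed
qed

lemma square_integer_mod_group_iff:
  assumes "even n" and y: "y \<in> carrier (integer_mod_group n)"
  shows "(\<exists>x\<in>carrier (integer_mod_group n). (x + x) mod int n = y) \<longleftrightarrow> even y"
proof
  assume "\<exists>x\<in>carrier (integer_mod_group n). (x + x) mod int n = y"
  then show "even y" using assms(1) by (auto simp: dvd_mod_iff)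
next
  assume "even y"
  then have "(y div 2 + y div 2) mod int n = y"
    using y by (simp add: mod_eq_self_integer_mod_group flip: mult_2)
  then show "\<exists>x\<in>carrier (integer_mod_group n). (x + x) mod int n = y"
    using mod_mem_carrier_integer_mod_group[of "y div 2" n] y
    by (metis mod_add_eq mod_eq_self_integer_mod_group)
qed

lemma subgroup_integer_mod_group_above_evens:
  assumes "even n" and H: "subgroup H (integer_mod_group n)"
    and evens: "{y \<in> carrier (integer_mod_group n). even y} \<subseteq> H"
  shows "H = {y \<in> carrier (integer_mod_group n). even y} \<or> H = carrier (integer_mod_group n)"
proof -
  interpret H: subgroup H "integer_mod_group n" by fact
  have "H = carrier (integer_mod_group n)" if q: "q \<in> H" "odd q" for q
  proof -
    have "y \<in> H" if y: "y \<in> carrier (integer_mod_group n)" "odd y" for y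
    proof -
      define d where "d = (y - q) mod int n"
      have "even d"
        unfolding d_def using assms(1) q(2) y(2) by (simp add: dvd_mod_iff)
      then have "d \<in> H"
        using evens mod_mem_carrier_integer_mod_group unfolding d_def by blast
      moreover have "(q + d) mod int n = y"
        unfolding d_def using y(1) by (simp add: mod_add_right_eq mod_eq_self_integer_mod_group)
      ultimately show ?thesis
        using H.m_closed[OF q(1)] by (metis mult_integer_mod_group)
    qed
    then show ?thesis using evens H.subset by blast
  qed
  then show ?thesis using evens H.subset by blast
qed

lemma has_perfect_code_integer_mod_group_iff:
  assumes "even n" and H: "subgroup H (integer_mod_group n)"
  shows "has_perfect_code (integer_mod_group n) H \<longleftrightarrow>
    H = carrier (integer_mod_group n) \<or> H = {0} \<or> H = generate (integer_mod_group n) {2 mod int n}"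
proof -
  let ?Z = "integer_mod_group n"
  let ?evens = "{y \<in> carrier ?Z. even y}"
  have square: "x \<otimes>\<^bsub>?Z\<^esub> x \<in> ?evens" if "x \<in> carrier ?Z" for x
  proof -
    have "(x + x) mod int n \<in> carrier ?Z" by (rule mod_mem_carrier_integer_mod_group)
    moreover from this have "even ((x + x) mod int n)"
      using square_integer_mod_group_iff[OF assms(1)] that by blast
    ultimately show ?thesis by simp
  qed
  have "(\<forall>x\<in>carrier ?Z. x \<otimes>\<^bsub>?Z\<^esub> x \<in> H) \<longleftrightarrow> ?evens \<subseteq> H"
  proof
    assume "\<forall>x\<in>carrier ?Z. x \<otimes>\<^bsub>?Z\<^esub> x \<in> H"
    then show "?evens \<subseteq> H"
      using square_integer_mod_group_iff[OF assms(1)] by fastforce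
  qed (use square in blast)
  also have "\<dots> \<longleftrightarrow> H = ?evens \<or> H = carrier ?Z"
    using subgroup_integer_mod_group_above_evens[OF assms] by blast
  finally show ?thesis
    using comm_group.has_perfect_code_iff[OF abelian_integer_mod_group H]
    unfolding generate_two_integer_mod_group[OF assms(1)] one_integer_mod_group by blast
qed

lemma (in group) involutions_eq: "involutions G = {x \<in> carrier G. x \<noteq> \<one> \<and> x \<otimes> x = \<one>}"
proof -
  have "ord x = 2 \<longleftrightarrow> x \<noteq> \<one> \<and> x \<otimes> x = \<one>" if x: "x \<in> carrier G" for x
  proof -
    have "x \<otimes> x = \<one> \<longleftrightarrow> ord x dvd 2"
      using pow_eq_id[OF x, of 2] x by (simp add: numeral_2_eq_2)
    moreover have "ord x dvd 2 \<longleftrightarrow> ord x = 1 \<or> ord x = 2"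
      using dvd_imp_le[of "ord x" 2] by (auto simp: le_Suc_eq numeral_2_eq_2)
    ultimately show ?thesis using ord_eq_1[OF x] by auto
  qed
  then show ?thesis unfolding involutions_def by auto
qed

lemma (in group) squares_mem_iff_involutions_subset:
  assumes H: "subgroup H G"
    and square_square: "\<And>x. x \<in> carrier G \<Longrightarrow> (x \<otimes> x) \<otimes> (x \<otimes> x) = \<one>"
    and involution_square: "\<And>y. y \<in> carrier G \<Longrightarrow> y \<otimes> y = \<one> \<Longrightarrow> \<exists>x\<in>carrier G. x \<otimes> x = y"
  shows "(\<forall>x\<in>carrier G. x \<otimes> x \<in> H) \<longleftrightarrow> involutions G \<subseteq> H"
proof
  assume "\<forall>x\<in>carrier G. x \<otimes> x \<in> H"
  then show "involutions G \<subseteq> H"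
    unfolding involutions_eq using involution_square by blast
next
  assume involutions: "involutions G \<subseteq> H"
  show "\<forall>x\<in>carrier G. x \<otimes> x \<in> H"
  proof
    fix x assume x: "x \<in> carrier G"
    show "x \<otimes> x \<in> H"
    proof (cases "x \<otimes> x = \<one>")
      case True
      then show ?thesis using subgroup.one_closed[OF H] by simp
    next
      case False
      then have "x \<otimes> x \<in> involutions G"
        unfolding involutions_eq using x square_square by simp
      then show ?thesis using involutions by blast
    qed
  qed
qed

lemma comm_group_product_group:
  assumes "\<And>i. i \<in> I \<Longrightarrow> comm_group (G i)"
  shows "comm_group (product_group I G)"
proof (rule group.group_comm_groupI)
  show "group (product_group I G)"
    using assms by (simp add: comm_group.axioms(2))
  fix x y assume "x \<in> carrier (product_group I G)" "y \<in> carrier (product_group I G)"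
  then show "x \<otimes>\<^bsub>product_group I G\<^esub> y = y \<otimes>\<^bsub>product_group I G\<^esub> x"
    using comm_monoid.m_comm[OF comm_group.axioms(1)[OF assms]]
    by (auto simp: PiE_iff intro!: restrict_ext)
qed

lemma square_square_product_Z4:
  fixes I :: "'i set"
  defines "P \<equiv> product_group I (\<lambda>_. integer_mod_group 4)"
  shows "(x \<otimes>\<^bsub>P\<^esub> x) \<otimes>\<^bsub>P\<^esub> (x \<otimes>\<^bsub>P\<^esub> x) = \<one>\<^bsub>P\<^esub>"
proof -
  have "((a + a) mod 4 + (a + a) mod 4) mod 4 = 0" for a :: int
    by (simp add: mod_add_eq) presburger
  then show ?thesis unfolding P_def by (simp add: fun_eq_iff)
qed

lemma involution_square_product_Z4:
  fixes I :: "'i set"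
  defines "P \<equiv> product_group I (\<lambda>_. integer_mod_group 4)"
  assumes y: "y \<in> carrier P" and "y \<otimes>\<^bsub>P\<^esub> y = \<one>\<^bsub>P\<^esub>"
  shows "\<exists>x\<in>carrier P. x \<otimes>\<^bsub>P\<^esub> x = y"
proof
  have range: "0 \<le> y i \<and> y i < 4" if "i \<in> I" for i
    using y that unfolding P_def by (auto simp: carrier_integer_mod_group)
  have halve: "(y i div 2 + y i div 2) mod 4 = y i" if "i \<in> I" for i
  proof -
    have "(y i + y i) mod 4 = 0"
      using fun_cong[OF assms(3), of i] that unfolding P_def by simp
    then show ?thesis using range[OF that] by presburger
  qed
  define x where "x = (\<lambda>i\<in>I. y i div 2)"
  have "0 \<le> y i div 2 \<and> y i div 2 < 4" if "i \<in> I" for i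
    using range[OF that] by presburger
  then show "x \<in> carrier P"
    unfolding x_def P_def by (auto simp: carrier_integer_mod_group)
  show "x \<otimes>\<^bsub>P\<^esub> x = y"
  proof
    fix i
    show "(x \<otimes>\<^bsub>P\<^esub> x) i = y i"
      using halve y PiE_arb[of y I _ i] unfolding P_def x_def by (cases "i \<in> I") auto
  qed
qed

lemma has_perfect_code_product_Z4_iff:
  fixes I :: "'i set"
  defines "P \<equiv> product_group I (\<lambda>_. integer_mod_group 4)"
  assumes H: "subgroup H P"
  shows "has_perfect_code P H \<longleftrightarrow> H = {\<one>\<^bsub>P\<^esub>} \<or> H = carrier P \<or> involutions P \<subseteq> H"
proof -
  interpret comm_group P
    unfolding P_def by (simp add: comm_group_product_group)
  have "(\<forall>x\<in>carrier P. x \<otimes>\<^bsub>P\<^esub> x \<in> H) \<longleftrightarrow> involutions P \<subseteq> H"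
    using squares_mem_iff_involutions_subset[OF H] square_square_product_Z4 involution_square_product_Z4
    unfolding P_def by blast
  moreover have "involutions P \<subseteq> carrier P"
    unfolding involutions_def by blast
  ultimately show ?thesis
    using has_perfect_code_iff[OF H] by blast
qed


theorem corollary6p2:
  shows
   "(\<forall>(G :: ('a, 'b) monoid_scheme) H.
        comm_group G \<and> finite (carrier G) \<and>
        (\<forall>x\<in>carrier G. x \<otimes>\<^bsub>G\<^esub> x = \<one>\<^bsub>G\<^esub>) \<and> subgroup H G
        \<longrightarrow> has_perfect_code G H)
  \<and> (\<forall>(G :: ('c, 'd) monoid_scheme) H.
        comm_group G \<and> finite (carrier G) \<and> odd (order G) \<and> subgroup H G
        \<longrightarrow> (has_perfect_code G H \<longleftrightarrow> H = {\<one>\<^bsub>G\<^esub>} \<or> H = carrier G))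
  \<and> (\<forall>(n :: nat) H.
        n > 0 \<and> even n \<and> subgroup H (integer_mod_group n)
        \<longrightarrow> (has_perfect_code (integer_mod_group n) H \<longleftrightarrow>
              H = carrier (integer_mod_group n) \<or> H = {0} \<or>
              H = generate (integer_mod_group n) {2 mod int n}))
  \<and> (\<forall>(n :: nat) H.
        n \<ge> 1 \<and> subgroup H (product_group {..<n} (\<lambda>_. integer_mod_group 4))
        \<longrightarrow> (has_perfect_code (product_group {..<n} (\<lambda>_. integer_mod_group 4)) H \<longleftrightarrow>
              H = {\<one>\<^bsub>product_group {..<n} (\<lambda>_. integer_mod_group 4)\<^esub>} \<or>
              H = carrier (product_group {..<n} (\<lambda>_. integer_mod_group 4)) \<or>
              involutions (product_group {..<n} (\<lambda>_. integer_mod_group 4)) \<subseteq> H))"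
proof (intro conjI allI impI, goal_cases)
  case (1 G H)
  then show ?case
    using comm_group.has_perfect_code_if_squares_mem[of G H] subgroup.one_closed[of H G] by auto
next
  case (2 G H)
  then show ?case using comm_group.has_perfect_code_iff_odd_order by blast
next
  case (3 n H)
  then show ?case using has_perfect_code_integer_mod_group_iff by blast
next
  case (4 n H)
  then show ?case using has_perfect_code_product_Z4_iff by blast
qed

end
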